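(* Let $\mathbf{B}\in\dot{\mathbb{P}}(\mathbb{L}(\mathbf{C}))$. If $\mathbf{B}$ is singular for $\mathcal{D}(\mathbf{C},\Omega)$, then $\mathbf{B}$ is irreducible for $\mathcal{D}(\mathbf{C},\Omega)$.
   Context: Events are binary random variables on a population $\Omega$; $\overline{X}=1-X$; $\mathbb{L}(\mathbf{C})=\mathbf{C}\cup\{\overline{X}:X\in\mathbf{C}\}$; $\dot{\mathbb{P}}(\mathbb{L}(\mathbf{C}))$ is the set of subsets of $\mathbb{L}(\mathbf{C})$ not containing both $X$ and $\overline{X}$; $(L)_{\mathbf{c}}$ is the value of literal $L$ under assignment $\mathbf{c}$; $\bigwedge(\mathbf{B})=\min_{L\in\mathbf{B}}L$. Potential outcomes $\mathcal{D}(\mathbf{C},\Omega)$: $D_{\mathbf{c}}(\omega)\in\{0,1\}$. $\mathbf{B}$ is a sufficient cause for $D$ relative to $\mathbf{C}$ for $\omega^*$ if some $\mathbf{c}^*$ has $(\bigwedge(\mathbf{B}))_{\mathbf{c}^*}=1$ and $D_{\mathbf{c}}(\omega^* )=1$ whenever $(\bigwedge(\mathbf{B}))_{\mathbf{c}}=1$; minimal if no proper subset is such; singular for $\omega^*$ if it is a minimal sufficient cause for $\omega^*$ and no other $\mathbf{B}'\in\dot{\mathbb{P}}(\mathbb{L}(\mathbf{C}))$ is a minimal sufficient cause for $\omega^*$; singular for $\mathcal{D}(\mathbf{C},\Omega)$ if singular for some $\omega^*\in\Omega$. A sufficient cause representation $(\mathbf{A},\mathfrak{B})$ for $\mathcal{D}(\mathbf{C},\Omega)$: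 binary random variables $\mathbf{A}=\langle A_1,\dots,A_p\rangle$ on $\Omega$ unaffected by interventions on $\mathbf{C}$ and $\mathfrak{B}=\langle\mathbf{B}_1,\dots,\mathbf{B}_p\rangle$, $\mathbf{B}_i\in\dot{\mathbb{P}}(\mathbb{L}(\mathbf{C}))$, with $D_{\mathbf{c}}(\omega)=1$ iff some $j$ has $A_j(\omega)=1$ and $(\bigwedge(\mathbf{B}_j))_{\mathbf{c}}=1$. $\mathbf{B}$ is irreducible for $\mathcal{D}(\mathbf{C},\Omega)$ if every such representation has some $\mathbf{B}_i\supseteq\mathbf{B}$. *)

theory Defs
  imports Main "HOL-Library.FuncSet"
begin

text \<open>A literal over variables of type 'v is a pair (X, b): (X, True) stands for X,
  (X, False) stands for its complement 1 - X. Events are modelled as bool-valued.\<close>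
type_synonym 'v lit = "'v \<times> bool"

definition lits :: "'v set \<Rightarrow> 'v lit set" where
  "lits C = C \<times> (UNIV :: bool set)"

definition dotP :: "'v set \<Rightarrow> 'v lit set set" where
  "dotP C = {B. B \<subseteq> lits C \<and> \<not> (\<exists>x. (x, True) \<in> B \<and> (x, False) \<in> B)}"

definition assignments :: "'v set \<Rightarrow> ('v \<Rightarrow> bool) set" where
  "assignments C = C \<rightarrow>\<^sub>E (UNIV :: bool set)"

definition lit_val :: "('v \<Rightarrow> bool) \<Rightarrow> 'v lit \<Rightarrow> bool" where
  "lit_val c L = (c (fst L) = snd L)"

definition conj_val :: "'v lit set \<Rightarrow> ('v \<Rightarrow> bool) \<Rightarrow> bool" where
  "conj_val B c = (\<forall>L\<in>B. lit_val c L)"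

text \<open>D c w is the potential outcome D_c(w).\<close>
definition sufficient_cause ::
  "'v set \<Rightarrow> (('v \<Rightarrow> bool) \<Rightarrow> 'w \<Rightarrow> bool) \<Rightarrow> 'w \<Rightarrow> 'v lit set \<Rightarrow> bool" where
  "sufficient_cause C D w B =
     (B \<in> dotP C \<and> (\<exists>c\<in>assignments C. conj_val B c) \<and>
      (\<forall>c\<in>assignments C. conj_val B c \<longrightarrow> D c w))"

definition minimal_sufficient_cause ::
  "'v set \<Rightarrow> (('v \<Rightarrow> bool) \<Rightarrow> 'w \<Rightarrow> bool) \<Rightarrow> 'w \<Rightarrow> 'v lit set \<Rightarrow> bool" where
  "minimal_sufficient_cause C D w B =
     (sufficient_cause C D w B \<and> (\<forall>B'. B' \<subset> B \<longrightarrow> \<not> sufficient_cause C D w B'))"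

definition singular_for ::
  "'v set \<Rightarrow> (('v \<Rightarrow> bool) \<Rightarrow> 'w \<Rightarrow> bool) \<Rightarrow> 'w \<Rightarrow> 'v lit set \<Rightarrow> bool" where
  "singular_for C D w B =
     (minimal_sufficient_cause C D w B \<and>
      (\<forall>B'\<in>dotP C. minimal_sufficient_cause C D w B' \<longrightarrow> B' = B))"

definition singular ::
  "'v set \<Rightarrow> (('v \<Rightarrow> bool) \<Rightarrow> 'w \<Rightarrow> bool) \<Rightarrow> 'w set \<Rightarrow> 'v lit set \<Rightarrow> bool" where
  "singular C D \<Omega> B = (\<exists>w\<in>\<Omega>. singular_for C D w B)"

definition sc_representation ::
  "'v set \<Rightarrow> (('v \<Rightarrow> bool) \<Rightarrow> 'w \<Rightarrow> bool) \<Rightarrow> 'w set \<Rightarrow> nat \<Rightarrow> (nat \<Rightarrow> 'w \<Rightarrow> bool)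
    \<Rightarrow> (nat \<Rightarrow> 'v lit set) \<Rightarrow> bool" where
  "sc_representation C D \<Omega> p A Bs =
     ((\<forall>i<p. Bs i \<in> dotP C) \<and>
      (\<forall>c\<in>assignments C. \<forall>w\<in>\<Omega>. D c w \<longleftrightarrow> (\<exists>j<p. A j w \<and> conj_val (Bs j) c)))"

definition irreducible ::
  "'v set \<Rightarrow> (('v \<Rightarrow> bool) \<Rightarrow> 'w \<Rightarrow> bool) \<Rightarrow> 'w set \<Rightarrow> 'v lit set \<Rightarrow> bool" where
  "irreducible C D \<Omega> B =
     (\<forall>p A Bs. sc_representation C D \<Omega> p A Bs \<longrightarrow> (\<exists>i<p. B \<subseteq> Bs i))"

end

theory Submission
  imports Defs
begin

text \<open>Let \<open>B\<close> be the unique minimal sufficient cause for \<open>\<omega>\<close>, and let \<open>c\<close> satisfy \<open>B\<close>,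
  so that \<open>D\<^sub>c(\<omega>) = 1\<close>. In any sufficient cause representation some component \<open>j\<close> with
  \<open>A\<^sub>j(\<omega>) = 1\<close> is satisfied by \<open>c\<close>; then \<open>B\<^sub>j\<close> is itself a sufficient cause for \<open>\<omega>\<close>.
  As \<open>C\<close> is finite, \<open>B\<^sub>j\<close> contains a minimal sufficient cause, which by singularity
  is \<open>B\<close>.\<close>

lemma finite_dotP_member:
  assumes "finite C" "B \<in> dotP C"
  shows "finite B"
proof (rule finite_subset)
  show "B \<subseteq> lits C" using assms(2) unfolding dotP_def by blast
  show "finite (lits C)" using assms(1) unfolding lits_def by simp
qed

lemma sufficient_cause_contains_minimal:
  assumes "finite X" "sufficient_cause C D w X"
  shows "\<exists>Y\<subseteq>X. minimal_sufficient_cause C D w Y"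
  using assms
proof (induction X rule: finite_psubset_induct)
  case (psubset X)
  show ?case
  proof (cases "minimal_sufficient_cause C D w X")
    case True
    then show ?thesis by blast
  next
    case False
    then obtain Y where "Y \<subset> X" "sufficient_cause C D w Y"
      using psubset.prems unfolding minimal_sufficient_cause_def by blast
    moreover have "finite Y"
      using \<open>Y \<subset> X\<close> psubset.hyps finite_subset by auto
    ultimately obtain Z where "Z \<subseteq> Y" "minimal_sufficient_cause C D w Z"
      using psubset.IH by blast
    with \<open>Y \<subset> X\<close> show ?thesis by blast
  qed
qed

lemma sc_representation_outcome:
  assumes "sc_representation C D \<Omega> p A Bs" "c \<in> assignments C" "w \<in> \<Omega>"
  shows "D c w \<longleftrightarrow> (\<exists>j<p. A j w \<and> conj_val (Bs j) c)"
  using assms unfolding sc_representation_def by blast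

lemma sc_representation_dotP:
  assumes "sc_representation C D \<Omega> p A Bs" "j < p"
  shows "Bs j \<in> dotP C"
  using assms unfolding sc_representation_def by blast

lemma sc_representation_component_sufficient:
  assumes rep: "sc_representation C D \<Omega> p A Bs" and "w \<in> \<Omega>"
    and "j < p" "A j w" "c \<in> assignments C" "conj_val (Bs j) c"
  shows "sufficient_cause C D w (Bs j)"
  unfolding sufficient_cause_def
proof (intro conjI ballI impI)
  show "Bs j \<in> dotP C" using rep \<open>j < p\<close> by (rule sc_representation_dotP)
  show "\<exists>c\<in>assignments C. conj_val (Bs j) c" using assms(5,6) by blast
next
  fix c' assume "c' \<in> assignments C" "conj_val (Bs j) c'"
  then show "D c' w"
    using sc_representation_outcome[OF rep _ \<open>w \<in> \<Omega>\<close>] \<open>j < p\<close> \<open>A j w\<close> by blast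
qed

lemma singular_for_unique:
  assumes "singular_for C D w B" "minimal_sufficient_cause C D w Y"
  shows "Y = B"
proof -
  have "Y \<in> dotP C"
    using assms(2) unfolding minimal_sufficient_cause_def sufficient_cause_def by blast
  with assms show ?thesis unfolding singular_for_def by blast
qed

theorem mainTheorem13:
  fixes C :: "'v set" and \<Omega> :: "'w set"
    and D :: "('v \<Rightarrow> bool) \<Rightarrow> 'w \<Rightarrow> bool" and B :: "'v lit set"
  assumes "finite C"
    and "B \<in> dotP C"
    and "singular C D \<Omega> B"
  shows "irreducible C D \<Omega> B"
  unfolding irreducible_def
proof (intro allI impI)
  fix p A Bs
  assume rep: "sc_representation C D \<Omega> p A Bs"
  obtain w where "w \<in> \<Omega>" and sing: "singular_for C D w B"
    using assms(3) unfolding singular_def by blast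
  then have "sufficient_cause C D w B"
    unfolding singular_for_def minimal_sufficient_cause_def by blast
  then obtain c where c: "c \<in> assignments C" "D c w"
    unfolding sufficient_cause_def by blast
  have "\<exists>j<p. A j w \<and> conj_val (Bs j) c"
    using sc_representation_outcome[OF rep c(1) \<open>w \<in> \<Omega>\<close>] c(2) by simp
  then obtain j where j: "j < p" "A j w" "conj_val (Bs j) c" by blast
  have "finite (Bs j)"
    using finite_dotP_member[OF assms(1) sc_representation_dotP[OF rep j(1)]] .
  moreover have "sufficient_cause C D w (Bs j)"
    using sc_representation_component_sufficient[OF rep \<open>w \<in> \<Omega>\<close> j(1,2) c(1) j(3)] .
  ultimately have "\<exists>Y\<subseteq>Bs j. minimal_sufficient_cause C D w Y"
    by (rule sufficient_cause_contains_minimal)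
  then obtain Y where "Y \<subseteq> Bs j" and min: "minimal_sufficient_cause C D w Y"
    by blast
  moreover have "Y = B" using sing min by (rule singular_for_unique)
  ultimately show "\<exists>i<p. B \<subseteq> Bs i" using j(1) by blast
qed

end
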